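(* Let $M$ be a smooth $n$-manifold with a torsion-free linear connection $\nabla$ and a symmetric $(0,2)$-tensor field $c$, let $\overline g_{\nabla,c}$ be the modified Riemannian extension on $T^{\ast}M$, and let $\widetilde{\nabla}$ be the linear connection on $T^{\ast}M$ given in the adapted frame by $\widetilde{\nabla}_{E_{\overline{i}}}E_{\overline{j}}=0$, $\widetilde{\nabla}_{E_{\overline{i}}}E_{j}=0$, $\widetilde{\nabla}_{E_{i}}E_{\overline{j}}=-\Gamma^{j}_{ih}E_{\overline{h}}$, $\widetilde{\nabla}_{E_{i}}E_{j}=\Gamma^{h}_{ij}E_{h}+\tfrac12(\nabla_i c_{jh}+\nabla_j c_{ih}-\nabla_h c_{ij})E_{\overline{h}}$. Then the scalar curvature $\widetilde r=\widetilde R_{\alpha\beta}(\overline g_{\nabla,c})^{\alpha\beta}$ of $\widetilde\nabla$ with respect to $\overline g_{\nabla,c}$ vanishes identically.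
   Context: Summation convention; $\overline{i}=n+i$; Greek indices run over the full adapted frame $\{E_j,E_{\overline j}\}$. $\Gamma^h_{ij}$ are the coefficients of $\nabla$ in local coordinates $(x^i)$; $\nabla_ic_{jk}$ the components of $\nabla c$. On $T^{\ast}M$ use induced coordinates $(x^i,p_i)$, $\partial_{\overline i}=\partial/\partial p_i$, and the adapted frame $E_j=\partial_j+p_a\Gamma^a_{hj}\partial_{\overline h}$, $E_{\overline j}=\partial_{\overline j}$. The modified Riemannian extension is $\overline{g}_{\nabla,c}(E_i,E_j)=c_{ij}$, $\overline{g}_{\nabla,c}(E_i,E_{\overline j})=\overline{g}_{\nabla,c}(E_{\overline j},E_i)=\delta_i^j$, $\overline{g}_{\nabla,c}(E_{\overline i},E_{\overline j})=0$, and $(\overline g_{\nabla,c})^{\alpha\beta}$ denotes its inverse. $\widetilde R_{\alpha\beta}=\widetilde R_{\sigma\alpha\beta}^{\ \ \ \ \sigma}$ is the Ricci tensor of $\widetilde\nabla$, where $\widetilde R(E_\alpha,E_\beta)E_\gamma=\widetilde R_{\alpha\beta\gamma}^{\ \ \ \ \varepsilon}E_\varepsilon$ and $\widetilde R(X,Y)=\widetilde\nabla_X\widetilde\nabla_Y-\widetilde\nabla_Y\widetilde\nabla_X-\widetilde\nabla_{[X,Y]}$. *)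

theory Defs
  imports "HOL-Analysis.Analysis"
begin

text \<open>The base manifold M is represented by a coordinate
domain U (an open subset of real^'n, n = CARD('n)); T*M over U has induced coordinates
(x,p) in real^'n \<times> real^'n. Greek indices range over 'n + 'n: Inl j is j, Inr j is the
barred index n+j.\<close>

type_synonym 'n pt = "(real^'n) \<times> (real^'n)"
type_synonym 'n gidx = "'n + 'n"

definition pdM :: "(real^('n::finite) \<Rightarrow> real) \<Rightarrow> 'n \<Rightarrow> real^'n \<Rightarrow> real" where
  "pdM f i x = frechet_derivative f (at x) (axis i 1)"

fun Ck_on :: "nat \<Rightarrow> (real^('n::finite) \<Rightarrow> real) \<Rightarrow> (real^'n) set \<Rightarrow> bool" where
  "Ck_on 0 f U = continuous_on U f"
| "Ck_on (Suc k) f U = ((\<forall>x\<in>U. f differentiable (at x)) \<and> (\<forall>i. Ck_on k (\<lambda>x. pdM f i x) U))"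

definition smooth_fun_on :: "(real^'n \<Rightarrow> real) \<Rightarrow> (real^'n) set \<Rightarrow> bool" where
  "smooth_fun_on f U = (\<forall>k. Ck_on k f U)"

text \<open>Components of \<nabla>c: \<nabla>_i c_{jk} = \<partial>_i c_{jk} - \<Gamma>^a_{ij} c_{ak} - \<Gamma>^a_{ik} c_{ja}.
 Gam h i j x is \<Gamma>^h_{ij}(x); c j k x is c_{jk}(x).\<close>
definition cov_c :: "(('n::finite) \<Rightarrow> 'n \<Rightarrow> 'n \<Rightarrow> real^'n \<Rightarrow> real) \<Rightarrow> ('n \<Rightarrow> 'n \<Rightarrow> real^'n \<Rightarrow> real)
    \<Rightarrow> 'n \<Rightarrow> 'n \<Rightarrow> 'n \<Rightarrow> real^'n \<Rightarrow> real" where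
  "cov_c Gam c i j k x = pdM (c j k) i x
      - (\<Sum>a\<in>UNIV. Gam a i j x * c a k x) - (\<Sum>a\<in>UNIV. Gam a i k x * c j a x)"

definition cbasis :: "('n::finite) gidx \<Rightarrow> 'n pt" where
  "cbasis \<mu> = (case \<mu> of Inl j \<Rightarrow> (axis j 1, 0) | Inr j \<Rightarrow> (0, axis j 1))"

definition cd :: "(('n::finite) pt \<Rightarrow> real) \<Rightarrow> 'n gidx \<Rightarrow> 'n pt \<Rightarrow> real" where
  "cd f \<mu> z = frechet_derivative f (at z) (cbasis \<mu>)"

type_synonym 'n vfield = "'n pt \<Rightarrow> 'n gidx \<Rightarrow> real"

definition vf_app :: "('n::finite) vfield \<Rightarrow> ('n pt \<Rightarrow> real) \<Rightarrow> 'n pt \<Rightarrow> real" where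
  "vf_app X f z = (\<Sum>\<mu>\<in>UNIV. X z \<mu> * cd f \<mu> z)"

definition lie_bracket :: "('n::finite) vfield \<Rightarrow> 'n vfield \<Rightarrow> 'n vfield" where
  "lie_bracket X Y z \<mu> = vf_app X (\<lambda>w. Y w \<mu>) z - vf_app Y (\<lambda>w. X w \<mu>) z"

definition adapted_frame :: "(('n::finite) \<Rightarrow> 'n \<Rightarrow> 'n \<Rightarrow> real^'n \<Rightarrow> real) \<Rightarrow> 'n gidx \<Rightarrow> 'n vfield" where
  "adapted_frame Gam \<alpha> z \<mu> =
     (case \<alpha> of
        Inl j \<Rightarrow> (case \<mu> of Inl k \<Rightarrow> (if k = j then 1 else 0)
                         | Inr h \<Rightarrow> (\<Sum>a\<in>UNIV. snd z $ a * Gam a h j (fst z)))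
      | Inr j \<Rightarrow> (if \<mu> = Inr j then 1 else 0))"

definition frame_comp :: "(('n::finite) \<Rightarrow> 'n \<Rightarrow> 'n \<Rightarrow> real^'n \<Rightarrow> real) \<Rightarrow> 'n pt \<Rightarrow> ('n gidx \<Rightarrow> real) \<Rightarrow> 'n gidx \<Rightarrow> real" where
  "frame_comp Gam z V = (THE a. \<forall>\<mu>. V \<mu> = (\<Sum>\<beta>\<in>UNIV. a \<beta> * adapted_frame Gam \<beta> z \<mu>))"

text \<open>Linear connection on T*M determined by its frame coefficients:
  \<nabla>_{E_\<alpha>} E_\<beta> = \<omega> \<alpha> \<beta> \<gamma> E_\<gamma>, extended to arbitrary fields by linearity and Leibniz.\<close>
definition frame_conn :: "(('n::finite) \<Rightarrow> 'n \<Rightarrow> 'n \<Rightarrow> real^'n \<Rightarrow> real)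
    \<Rightarrow> ('n gidx \<Rightarrow> 'n gidx \<Rightarrow> 'n gidx \<Rightarrow> 'n pt \<Rightarrow> real) \<Rightarrow> 'n vfield \<Rightarrow> 'n vfield \<Rightarrow> 'n vfield" where
  "frame_conn Gam \<omega> X Y z \<mu> =
     (\<Sum>\<gamma>\<in>UNIV.
        (vf_app X (\<lambda>w. frame_comp Gam w (Y w) \<gamma>) z
         + (\<Sum>\<alpha>\<in>UNIV. \<Sum>\<beta>\<in>UNIV. frame_comp Gam z (X z) \<alpha> * frame_comp Gam z (Y z) \<beta> * \<omega> \<alpha> \<beta> \<gamma> z))
        * adapted_frame Gam \<gamma> z \<mu>)"

definition curv :: "(('n::finite) \<Rightarrow> 'n \<Rightarrow> 'n \<Rightarrow> real^'n \<Rightarrow> real)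
    \<Rightarrow> ('n gidx \<Rightarrow> 'n gidx \<Rightarrow> 'n gidx \<Rightarrow> 'n pt \<Rightarrow> real) \<Rightarrow> 'n vfield \<Rightarrow> 'n vfield \<Rightarrow> 'n vfield \<Rightarrow> 'n vfield" where
  "curv Gam \<omega> X Y Z z \<mu> =
     frame_conn Gam \<omega> X (frame_conn Gam \<omega> Y Z) z \<mu>
     - frame_conn Gam \<omega> Y (frame_conn Gam \<omega> X Z) z \<mu>
     - frame_conn Gam \<omega> (lie_bracket X Y) Z z \<mu>"

definition curv_comp where
  "curv_comp Gam \<omega> \<alpha> \<beta> \<gamma> \<epsilon> z =
     frame_comp Gam z (curv Gam \<omega> (adapted_frame Gam \<alpha>) (adapted_frame Gam \<beta>) (adapted_frame Gam \<gamma>) z) \<epsilon>"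

definition ricci_comp where
  "ricci_comp Gam \<omega> \<alpha> \<beta> z = (\<Sum>\<sigma>\<in>UNIV. curv_comp Gam \<omega> \<sigma> \<alpha> \<beta> \<sigma> z)"

text \<open>Modified Riemannian extension, components in the adapted frame (as a matrix).\<close>
definition mod_riem_ext :: "(('n::finite) \<Rightarrow> 'n \<Rightarrow> real^'n \<Rightarrow> real) \<Rightarrow> 'n pt \<Rightarrow> real^('n gidx)^('n gidx)" where
  "mod_riem_ext c z = (\<chi> \<alpha> \<beta>.
     (case \<alpha> of
        Inl i \<Rightarrow> (case \<beta> of Inl j \<Rightarrow> c i j (fst z) | Inr j \<Rightarrow> (if i = j then 1 else 0))
      | Inr i \<Rightarrow> (case \<beta> of Inl j \<Rightarrow> (if i = j then 1 else 0) | Inr j \<Rightarrow> 0)))"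

definition conn_coeffs :: "(('n::finite) \<Rightarrow> 'n \<Rightarrow> 'n \<Rightarrow> real^'n \<Rightarrow> real) \<Rightarrow> ('n \<Rightarrow> 'n \<Rightarrow> real^'n \<Rightarrow> real)
    \<Rightarrow> 'n gidx \<Rightarrow> 'n gidx \<Rightarrow> 'n gidx \<Rightarrow> 'n pt \<Rightarrow> real" where
  "conn_coeffs Gam c \<alpha> \<beta> \<gamma> z =
     (case \<alpha> of
        Inr i \<Rightarrow> 0
      | Inl i \<Rightarrow>
          (case \<beta> of
             Inr j \<Rightarrow> (case \<gamma> of Inl h \<Rightarrow> 0 | Inr h \<Rightarrow> - Gam j i h (fst z))
           | Inl j \<Rightarrow> (case \<gamma> of
                         Inl h \<Rightarrow> Gam h i j (fst z)
                       | Inr h \<Rightarrow> (cov_c Gam c i j h (fst z) + cov_c Gam c j i h (fst z)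
                                   - cov_c Gam c h i j (fst z)) / 2)))"

definition scalar_curv where
  "scalar_curv Gam c z =
     (\<Sum>\<alpha>\<in>UNIV. \<Sum>\<beta>\<in>UNIV. ricci_comp Gam (conn_coeffs Gam c) \<alpha> \<beta> z * matrix_inv (mod_riem_ext c z) $ \<alpha> $ \<beta>)"

end

theory Submission imports Defs begin

text \<open>The inverse of the modified Riemannian extension has vanishing horizontal block
  (g^ij = 0, g^i(n+j) = delta_ij, g^(n+i)(n+j) = -c_ij), so the scalar curvature only involves
  Ricci components with at least one vertical index. In the adapted frame the vertical fields have
  zero connection coefficients and all brackets of frame fields are vertical, so the curvature of
  frame fields is built from frame derivatives and products of the coefficients alone. The
  coefficients with a vertical slot are -Gamma, which do not depend on the fibre coordinates p;
  this kills every Ricci component with a vertical index.\<close>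

lemma sum_UNIV_sum:
  "(\<Sum>a\<in>(UNIV::('a::finite + 'b::finite) set). f a) = (\<Sum>i\<in>UNIV. f (Inl i)) + (\<Sum>j\<in>UNIV. f (Inr j))"
proof -
  have "(\<Sum>a\<in>(UNIV::('a + 'b) set). f a) = (\<Sum>a\<in>UNIV <+> UNIV. f a)" by simp
  also have "\<dots> = (\<Sum>i\<in>UNIV. f (Inl i)) + (\<Sum>j\<in>UNIV. f (Inr j))"
    by (subst sum.Plus) (auto simp: comp_def)
  finally show ?thesis .
qed

lemma mult_if_one_left [simp]: "(if P then (1::real) else 0) * y = (if P then y else 0)" by simp
lemma mult_if_one_right [simp]: "y * (if P then (1::real) else 0) = (if P then y else 0)" by simp
lemma mult_if_zero_left [simp]: "(if P then y else (0::real)) * x = (if P then y * x else 0)" by simp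
lemma mult_if_zero_right [simp]: "x * (if P then y else (0::real)) = (if P then x * y else 0)" by simp

definition frame_vertical_part :: "('n::finite \<Rightarrow> 'n \<Rightarrow> 'n \<Rightarrow> real^'n \<Rightarrow> real) \<Rightarrow> 'n pt \<Rightarrow> 'n \<Rightarrow> 'n \<Rightarrow> real"
  where "frame_vertical_part Gam z h j = (\<Sum>a\<in>UNIV. snd z $ a * Gam a h j (fst z))"

definition adapted_coeffs ::
    "('n::finite \<Rightarrow> 'n \<Rightarrow> 'n \<Rightarrow> real^'n \<Rightarrow> real) \<Rightarrow> 'n pt \<Rightarrow> ('n gidx \<Rightarrow> real) \<Rightarrow> 'n gidx \<Rightarrow> real"
  where "adapted_coeffs Gam z V \<gamma> =
    (case \<gamma> of
       Inl k \<Rightarrow> V (Inl k)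
     | Inr h \<Rightarrow> V (Inr h) - (\<Sum>j\<in>UNIV. V (Inl j) * frame_vertical_part Gam z h j))"

lemma adapted_frame_combination_Inl:
  "(\<Sum>\<beta>\<in>UNIV. a \<beta> * adapted_frame Gam \<beta> z (Inl k)) = a (Inl k)"
  by (simp add: sum_UNIV_sum adapted_frame_def if_distrib cong: if_cong)

lemma adapted_frame_combination_Inr:
  "(\<Sum>\<beta>\<in>UNIV. a \<beta> * adapted_frame Gam \<beta> z (Inr h))
     = a (Inr h) + (\<Sum>j\<in>UNIV. a (Inl j) * frame_vertical_part Gam z h j)"
  by (simp add: sum_UNIV_sum adapted_frame_def frame_vertical_part_def if_distrib cong: if_cong)

lemma adapted_frame_combination_iff:
  "(\<forall>\<mu>. V \<mu> = (\<Sum>\<beta>\<in>UNIV. a \<beta> * adapted_frame Gam \<beta> z \<mu>)) \<longleftrightarrow> a = adapted_coeffs Gam z V"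
proof
  assume "\<forall>\<mu>. V \<mu> = (\<Sum>\<beta>\<in>UNIV. a \<beta> * adapted_frame Gam \<beta> z \<mu>)"
  then show "a = adapted_coeffs Gam z V"
    by (intro ext, case_tac x)
       (simp_all add: adapted_frame_combination_Inl adapted_frame_combination_Inr adapted_coeffs_def)
next
  assume "a = adapted_coeffs Gam z V"
  then show "\<forall>\<mu>. V \<mu> = (\<Sum>\<beta>\<in>UNIV. a \<beta> * adapted_frame Gam \<beta> z \<mu>)"
    by (intro allI, case_tac \<mu>)
       (simp_all add: adapted_frame_combination_Inl adapted_frame_combination_Inr adapted_coeffs_def)
qed

lemma frame_comp_eq_adapted_coeffs: "frame_comp Gam z V = adapted_coeffs Gam z V"
  unfolding frame_comp_def adapted_frame_combination_iff by simp

lemma frame_comp_eqI: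
  assumes "\<And>\<mu>. V \<mu> = (\<Sum>\<beta>\<in>UNIV. a \<beta> * adapted_frame Gam \<beta> z \<mu>)"
  shows "frame_comp Gam z V = a"
  using assms adapted_frame_combination_iff[of V a Gam z] by (simp add: frame_comp_eq_adapted_coeffs)

lemma frame_comp_expansion: "V = (\<lambda>\<mu>. \<Sum>\<beta>\<in>UNIV. frame_comp Gam z V \<beta> * adapted_frame Gam \<beta> z \<mu>)"
  using adapted_frame_combination_iff[of V "frame_comp Gam z V" Gam z]
  by (auto simp: frame_comp_eq_adapted_coeffs)

lemma frame_comp_adapted_frame:
  "frame_comp Gam z (adapted_frame Gam \<beta> z) = (\<lambda>\<gamma>. if \<gamma> = \<beta> then 1 else 0)"
  by (rule frame_comp_eqI) simp

lemma frame_comp_diff3: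
  "frame_comp Gam z (\<lambda>\<mu>. A \<mu> - B \<mu> - C \<mu>)
     = (\<lambda>\<gamma>. frame_comp Gam z A \<gamma> - frame_comp Gam z B \<gamma> - frame_comp Gam z C \<gamma>)"
proof (rule frame_comp_eqI)
  fix \<mu>
  have "A \<mu> - B \<mu> - C \<mu> = (\<Sum>\<beta>\<in>UNIV. frame_comp Gam z A \<beta> * adapted_frame Gam \<beta> z \<mu>)
      - (\<Sum>\<beta>\<in>UNIV. frame_comp Gam z B \<beta> * adapted_frame Gam \<beta> z \<mu>)
      - (\<Sum>\<beta>\<in>UNIV. frame_comp Gam z C \<beta> * adapted_frame Gam \<beta> z \<mu>)"
    by (subst (1) frame_comp_expansion[of A Gam z], subst (1) frame_comp_expansion[of B Gam z],
        subst (1) frame_comp_expansion[of C Gam z]) simp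
  then show "A \<mu> - B \<mu> - C \<mu>
      = (\<Sum>\<beta>\<in>UNIV. (frame_comp Gam z A \<beta> - frame_comp Gam z B \<beta> - frame_comp Gam z C \<beta>)
           * adapted_frame Gam \<beta> z \<mu>)"
    by (simp add: sum_subtractf left_diff_distrib)
qed

lemma cd_const: "cd (\<lambda>_. k) \<mu> z = 0"
proof -
  have "frechet_derivative (\<lambda>_. k) (at z) = (\<lambda>_. 0)"
    by (metis frechet_derivative_at has_derivative_const)
  then show ?thesis by (simp add: cd_def)
qed

lemma vf_app_const: "vf_app X (\<lambda>_. k) z = 0"
  by (simp add: vf_app_def cd_const)

lemma vf_app_adapted_frame_Inr: "vf_app (adapted_frame Gam (Inr h)) f z = cd f (Inr h) z"
  by (simp add: vf_app_def sum_UNIV_sum adapted_frame_def)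

lemma cd_Inr_fst:
  assumes "g differentiable (at (fst z))"
  shows "cd (\<lambda>w. g (fst w)) (Inr h) z = 0"
proof -
  obtain g' where g': "(g has_derivative g') (at (fst z))"
    using assms by (auto simp: differentiable_def)
  have "((\<lambda>w. g (fst w)) has_derivative (\<lambda>v. g' (fst v))) (at z)"
    using has_derivative_compose[OF has_derivative_fst[OF has_derivative_ident] g'] by simp
  then have "frechet_derivative (\<lambda>w. g (fst w)) (at z) = (\<lambda>v. g' (fst v))"
    by (metis frechet_derivative_at)
  moreover have "g' 0 = 0"
    using g' has_derivative_linear linear_0 by blast
  ultimately show ?thesis by (simp add: cd_def cbasis_def)
qed

lemma adapted_frame_Inl:
  "adapted_frame Gam \<alpha> w (Inl k) = (case \<alpha> of Inl j \<Rightarrow> if k = j then 1 else 0 | Inr j \<Rightarrow> 0)"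
  by (cases \<alpha>) (simp_all add: adapted_frame_def)

lemma frame_comp_lie_bracket_adapted_frame_Inl:
  "frame_comp Gam z (lie_bracket (adapted_frame Gam \<sigma>) (adapted_frame Gam \<alpha>) z) (Inl k) = 0"
  by (simp add: frame_comp_eq_adapted_coeffs adapted_coeffs_def lie_bracket_def adapted_frame_Inl
      vf_app_const)

lemma frame_comp_frame_conn:
  "frame_comp Gam z (frame_conn Gam \<omega> X Y z) = (\<lambda>\<gamma>.
     vf_app X (\<lambda>w. frame_comp Gam w (Y w) \<gamma>) z
     + (\<Sum>\<alpha>\<in>UNIV. \<Sum>\<beta>\<in>UNIV. frame_comp Gam z (X z) \<alpha> * frame_comp Gam z (Y z) \<beta> * \<omega> \<alpha> \<beta> \<gamma> z))"
  by (rule frame_comp_eqI) (simp add: frame_conn_def)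

lemma frame_comp_frame_conn_adapted_frame:
  "frame_comp Gam w (frame_conn Gam \<omega> (adapted_frame Gam \<alpha>) (adapted_frame Gam \<beta>) w)
     = (\<lambda>\<gamma>. \<omega> \<alpha> \<beta> \<gamma> w)"
  by (simp add: frame_comp_frame_conn frame_comp_adapted_frame vf_app_const)

lemma curv_comp_eq:
  assumes vertical_zero: "\<And>i \<beta> \<gamma> z. \<omega> (Inr i) \<beta> \<gamma> z = 0"
  shows "curv_comp Gam \<omega> \<sigma> \<alpha> \<beta> \<epsilon> z =
      vf_app (adapted_frame Gam \<sigma>) (\<omega> \<alpha> \<beta> \<epsilon>) z + (\<Sum>\<delta>\<in>UNIV. \<omega> \<alpha> \<beta> \<delta> z * \<omega> \<sigma> \<delta> \<epsilon> z)
    - vf_app (adapted_frame Gam \<alpha>) (\<omega> \<sigma> \<beta> \<epsilon>) z - (\<Sum>\<delta>\<in>UNIV. \<omega> \<sigma> \<beta> \<delta> z * \<omega> \<alpha> \<delta> \<epsilon> z)"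
proof -
  let ?E = "adapted_frame Gam"
  have curv: "curv Gam \<omega> (?E \<sigma>) (?E \<alpha>) (?E \<beta>) z
    = (\<lambda>\<mu>. frame_conn Gam \<omega> (?E \<sigma>) (frame_conn Gam \<omega> (?E \<alpha>) (?E \<beta>)) z \<mu>
         - frame_conn Gam \<omega> (?E \<alpha>) (frame_conn Gam \<omega> (?E \<sigma>) (?E \<beta>)) z \<mu>
         - frame_conn Gam \<omega> (lie_bracket (?E \<sigma>) (?E \<alpha>)) (?E \<beta>) z \<mu>)"
    by (rule ext) (simp add: curv_def)
  have bracket_term:
    "(\<Sum>\<delta>\<in>UNIV. frame_comp Gam z (lie_bracket (?E \<sigma>) (?E \<alpha>) z) \<delta> * \<omega> \<delta> \<beta> \<epsilon> z) = 0"
    by (simp add: sum_UNIV_sum frame_comp_lie_bracket_adapted_frame_Inl vertical_zero)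
  show ?thesis
    unfolding curv_comp_def curv frame_comp_diff3
    using bracket_term
    by (simp add: frame_comp_frame_conn frame_comp_frame_conn_adapted_frame frame_comp_adapted_frame
        vf_app_const sum.swap[where A = "UNIV::'a gidx set"])
qed

lemma conn_coeffs_Inr [simp]: "conn_coeffs Gam c (Inr i) \<beta> \<gamma> = (\<lambda>_. 0)"
  by (rule ext) (simp add: conn_coeffs_def)

lemma conn_coeffs_Inl_Inr_Inl [simp]: "conn_coeffs Gam c (Inl i) (Inr j) (Inl h) = (\<lambda>_. 0)"
  by (rule ext) (simp add: conn_coeffs_def)

lemma conn_coeffs_Inl_Inr_Inr [simp]:
  "conn_coeffs Gam c (Inl i) (Inr j) (Inr h) = (\<lambda>z. (\<lambda>y. - Gam j i h y) (fst z))"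
  by (rule ext) (simp add: conn_coeffs_def)

lemma conn_coeffs_Inl_Inl_Inl [simp]: "conn_coeffs Gam c (Inl i) (Inl j) (Inl h) = (\<lambda>z. Gam h i j (fst z))"
  by (rule ext) (simp add: conn_coeffs_def)

lemmas curv_comp_conn_coeffs = curv_comp_eq[where \<omega> = "conn_coeffs Gam c" for Gam c, OF conn_coeffs_Inr[THEN fun_cong]]

lemma ricci_comp_Inr_Inr: "ricci_comp Gam (conn_coeffs Gam c) (Inr i) (Inr j) z = 0"
  unfolding ricci_comp_def curv_comp_conn_coeffs by (simp add: sum_UNIV_sum vf_app_const)

context
  fixes Gam :: "'n::finite \<Rightarrow> 'n \<Rightarrow> 'n \<Rightarrow> real^'n \<Rightarrow> real" and z :: "'n pt"
  assumes Gam_differentiable: "\<And>h i j. Gam h i j differentiable (at (fst z))"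
begin

lemma cd_Inr_Gam: "cd (\<lambda>w. Gam h i j (fst w)) (Inr k) z = 0"
  by (rule cd_Inr_fst[OF Gam_differentiable])

lemma cd_Inr_minus_Gam: "cd (\<lambda>w. - Gam h i j (fst w)) (Inr k) z = 0"
  using cd_Inr_fst[of "\<lambda>y. - Gam h i j y" z] Gam_differentiable by simp

lemma ricci_comp_Inr_Inl: "ricci_comp Gam (conn_coeffs Gam c) (Inr i) (Inl j) z = 0"
  unfolding ricci_comp_def curv_comp_conn_coeffs
  by (simp add: sum_UNIV_sum vf_app_const vf_app_adapted_frame_Inr cd_const cd_Inr_Gam cd_Inr_minus_Gam
      del: minus_apply)

lemma ricci_comp_Inl_Inr: "ricci_comp Gam (conn_coeffs Gam c) (Inl i) (Inr j) z = 0"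
  unfolding ricci_comp_def curv_comp_conn_coeffs
  by (simp add: sum_UNIV_sum vf_app_const vf_app_adapted_frame_Inr cd_const cd_Inr_Gam cd_Inr_minus_Gam
      del: minus_apply)

end

definition mod_riem_ext_inv :: "('n::finite \<Rightarrow> 'n \<Rightarrow> real^'n \<Rightarrow> real) \<Rightarrow> 'n pt \<Rightarrow> real^('n gidx)^('n gidx)"
  where "mod_riem_ext_inv c z = (\<chi> \<alpha> \<beta>.
    (case \<alpha> of
       Inl i \<Rightarrow> (case \<beta> of Inl j \<Rightarrow> 0 | Inr j \<Rightarrow> (if i = j then 1 else 0))
     | Inr i \<Rightarrow> (case \<beta> of Inl j \<Rightarrow> (if i = j then 1 else 0) | Inr j \<Rightarrow> - c i j (fst z))))"

lemma matrix_inv_eqI: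
  fixes A B :: "'a::semiring_1^'n^'n"
  assumes AB: "A ** B = mat 1" and BA: "B ** A = mat 1"
  shows "matrix_inv A = B"
proof -
  have inv: "A ** matrix_inv A = mat 1 \<and> matrix_inv A ** A = mat 1"
    unfolding matrix_inv_def by (rule someI[of _ B]) (use AB BA in simp)
  have "matrix_inv A = matrix_inv A ** (A ** B)" by (simp add: AB)
  also have "\<dots> = (matrix_inv A ** A) ** B" by (simp add: matrix_mul_assoc)
  also have "\<dots> = B" using inv by simp
  finally show ?thesis .
qed

lemma mod_riem_ext_mult_inv: "mod_riem_ext c z ** mod_riem_ext_inv c z = mat 1"
  unfolding vec_eq_iff
proof (intro allI)
  fix \<alpha> \<beta> :: "'a gidx"
  show "(mod_riem_ext c z ** mod_riem_ext_inv c z) $ \<alpha> $ \<beta> = mat 1 $ \<alpha> $ \<beta>"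
    unfolding matrix_matrix_mult_def mat_def
    by (cases \<alpha>; cases \<beta>) (simp_all add: sum_UNIV_sum mod_riem_ext_def mod_riem_ext_inv_def sum_negf)
qed

lemma mod_riem_ext_inv_mult: "mod_riem_ext_inv c z ** mod_riem_ext c z = mat 1"
  unfolding vec_eq_iff
proof (intro allI)
  fix \<alpha> \<beta> :: "'a gidx"
  show "(mod_riem_ext_inv c z ** mod_riem_ext c z) $ \<alpha> $ \<beta> = mat 1 $ \<alpha> $ \<beta>"
    unfolding matrix_matrix_mult_def mat_def
    by (cases \<alpha>; cases \<beta>) (simp_all add: sum_UNIV_sum mod_riem_ext_def mod_riem_ext_inv_def sum_negf)
qed

lemma matrix_inv_mod_riem_ext: "matrix_inv (mod_riem_ext c z) = mod_riem_ext_inv c z"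
  by (rule matrix_inv_eqI[OF mod_riem_ext_mult_inv mod_riem_ext_inv_mult])

theorem theorem4:
  fixes U :: "(real^'n) set"
    and Gam :: "'n \<Rightarrow> 'n \<Rightarrow> 'n \<Rightarrow> real^'n \<Rightarrow> real"
    and c :: "'n \<Rightarrow> 'n \<Rightarrow> real^'n \<Rightarrow> real"
  assumes "open U"
    and "\<And>h i j. smooth_fun_on (Gam h i j) U"
    and "\<And>i j. smooth_fun_on (c i j) U"
    and "\<And>h i j x. x \<in> U \<Longrightarrow> Gam h i j x = Gam h j i x"
    and "\<And>i j x. x \<in> U \<Longrightarrow> c i j x = c j i x"
    and "x \<in> U"
  shows "scalar_curv Gam c (x, p) = 0"
proof -
  have "Gam h i j differentiable (at (fst (x, p)))" for h i j
    using assms(2)[of h i j] assms(6) unfolding smooth_fun_on_def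
    by (metis Ck_on.simps(2) fst_conv)
  then show ?thesis
    unfolding scalar_curv_def matrix_inv_mod_riem_ext
    by (simp add: sum_UNIV_sum mod_riem_ext_inv_def ricci_comp_Inr_Inr
        ricci_comp_Inr_Inl ricci_comp_Inl_Inr)
qed

end
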